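(* Let $$f(t)=\frac{2431}{80}t^9-\frac{1287}{20}t^7+\frac{18333}{400}t^5+\frac{343}{40}t^4-\frac{83}{10}t^3-\frac{213}{100}t^2+\frac{t}{10}-\frac{1}{200}.$$ For any finite set $X=\{x_1,\dots,x_n\}\subset\mathbf{S}^2$, with $\phi_{i,j}$ the angular distance between $x_i$ and $x_j$, $$S(X):=\sum_{i=1}^n\sum_{j=1}^n f(\cos\phi_{i,j})\ \ge\ n^2.$$
   Context: $\mathbf{S}^2$ is the unit sphere in $\mathbb{R}^3$; the angular (spherical) distance between unit vectors $x,y$ is $\arccos\langle x,y\rangle$. *)

theory Defs
  imports "HOL-Analysis.Analysis"
begin

definition f_poly :: "real \<Rightarrow> real" where
  "f_poly t = 2431/80 * t^9 - 1287/20 * t^7 + 18333/400 * t^5 + 343/40 * t^4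
     - 83/10 * t^3 - 213/100 * t^2 + t/10 - 1/200"

definition ang_dist :: "real^3 \<Rightarrow> real^3 \<Rightarrow> real" where
  "ang_dist x y = arccos (inner x y)"

end

theory Submission
  imports Defs "HOL-Computational_Algebra.Polynomial"
begin

(* f = 1 + (8/5) P1 + (87/25) P2 + (33/20) P3 + (49/25) P4 + (1/10) P5 + (8/25) P9 in Legendre
   polynomials, so it suffices that each kernel P_n(<x,y>) is positive semidefinite on S^2.
   Writing x = (z, c) with z = x1 + i x2, the addition theorem expresses P_n(<x,y>) as a
   nonnegative combination of the kernels P_n^(m)(c) P_n^(m)(c') Re ((z conj z')^m), and
   Re ((z conj z')^m) = Re (z^m conj (z'^m)) is a Gram kernel. Summing the expansion of f over
   X \<times> X therefore gives n^2 plus a nonnegative quantity. *)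

definition psd_kernel_on :: "'a set \<Rightarrow> ('a \<Rightarrow> 'a \<Rightarrow> real) \<Rightarrow> bool" where
  "psd_kernel_on S K \<longleftrightarrow>
     (\<forall>X h. finite X \<longrightarrow> X \<subseteq> S \<longrightarrow> 0 \<le> (\<Sum>x\<in>X. \<Sum>y\<in>X. h x * h y * K x y))"

lemma psd_kernel_onD:
  "psd_kernel_on S K \<Longrightarrow> finite X \<Longrightarrow> X \<subseteq> S \<Longrightarrow> 0 \<le> (\<Sum>x\<in>X. \<Sum>y\<in>X. h x * h y * K x y)"
  unfolding psd_kernel_on_def by blast

lemma psd_kernel_on_cong:
  assumes "psd_kernel_on S K" and "\<And>x y. x \<in> S \<Longrightarrow> y \<in> S \<Longrightarrow> K x y = K' x y"
  shows "psd_kernel_on S K'"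
  unfolding psd_kernel_on_def
proof safe
  fix X h assume "finite X" "X \<subseteq> S"
  then have "(\<Sum>x\<in>X. \<Sum>y\<in>X. h x * h y * K' x y) = (\<Sum>x\<in>X. \<Sum>y\<in>X. h x * h y * K x y)"
    by (intro sum.cong refl) (auto simp: assms(2) subset_iff)
  with psd_kernel_onD[OF assms(1) \<open>finite X\<close> \<open>X \<subseteq> S\<close>] show "0 \<le> (\<Sum>x\<in>X. \<Sum>y\<in>X. h x * h y * K' x y)"
    by simp
qed

lemma psd_kernel_on_weighted:
  assumes "psd_kernel_on S K"
  shows "psd_kernel_on S (\<lambda>x y. w x * w y * K x y)"
  unfolding psd_kernel_on_def
proof safe
  fix X h assume "finite X" "X \<subseteq> S"
  from psd_kernel_onD[OF assms this, of "\<lambda>x. h x * w x"]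
  show "0 \<le> (\<Sum>x\<in>X. \<Sum>y\<in>X. h x * h y * (w x * w y * K x y))"
    by (simp add: mult_ac)
qed

lemma psd_kernel_on_scale:
  assumes "0 \<le> a" and "psd_kernel_on S K"
  shows "psd_kernel_on S (\<lambda>x y. a * K x y)"
  unfolding psd_kernel_on_def
proof safe
  fix X h assume "finite X" "X \<subseteq> S"
  with assms have "0 \<le> a * (\<Sum>x\<in>X. \<Sum>y\<in>X. h x * h y * K x y)"
    by (simp add: psd_kernel_onD)
  then show "0 \<le> (\<Sum>x\<in>X. \<Sum>y\<in>X. h x * h y * (a * K x y))"
    by (simp add: sum_distrib_left mult_ac)
qed

lemma psd_kernel_on_add:
  assumes "psd_kernel_on S K" and "psd_kernel_on S L"
  shows "psd_kernel_on S (\<lambda>x y. K x y + L x y)"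
  using assms unfolding psd_kernel_on_def
  by (simp add: distrib_left sum.distrib add_nonneg_nonneg)

lemma psd_kernel_on_sum:
  assumes "\<And>i. i \<in> I \<Longrightarrow> psd_kernel_on S (K i)"
  shows "psd_kernel_on S (\<lambda>x y. \<Sum>i\<in>I. K i x y)"
  unfolding psd_kernel_on_def
proof safe
  fix X h assume "finite X" "X \<subseteq> S"
  have "(\<Sum>x\<in>X. \<Sum>y\<in>X. h x * h y * (\<Sum>i\<in>I. K i x y))
          = (\<Sum>i\<in>I. \<Sum>x\<in>X. \<Sum>y\<in>X. h x * h y * K i x y)"
    by (simp add: sum_distrib_left sum.swap[of _ I])
  also have "\<dots> \<ge> 0"
    using assms psd_kernel_onD[OF _ \<open>finite X\<close> \<open>X \<subseteq> S\<close>] by (simp add: sum_nonneg)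
  finally show "0 \<le> (\<Sum>x\<in>X. \<Sum>y\<in>X. h x * h y * (\<Sum>i\<in>I. K i x y))" .
qed

lemma psd_kernel_on_Re_power:
  fixes z :: "'a \<Rightarrow> complex"
  shows "psd_kernel_on S (\<lambda>x y. Re ((z x * cnj (z y)) ^ m))"
  unfolding psd_kernel_on_def
proof safe
  fix X :: "'a set" and h assume "finite X"
  define w where "w = (\<Sum>x\<in>X. of_real (h x) * z x ^ m)"
  have "w * cnj w = (\<Sum>x\<in>X. \<Sum>y\<in>X. of_real (h x * h y) * (z x * cnj (z y)) ^ m)"
    unfolding w_def cnj_sum sum_product
    by (intro sum.cong refl) (simp add: power_mult_distrib algebra_simps)
  then have "(\<Sum>x\<in>X. \<Sum>y\<in>X. h x * h y * Re ((z x * cnj (z y)) ^ m)) = Re (w * cnj w)"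
    by (simp add: Re_sum)
  also have "\<dots> = (cmod w)\<^sup>2"
    by (simp add: complex_mult_cnj cmod_power2)
  finally show "0 \<le> (\<Sum>x\<in>X. \<Sum>y\<in>X. h x * h y * Re ((z x * cnj (z y)) ^ m))"
    by simp
qed

fun re_pow_poly :: "nat \<Rightarrow> real \<Rightarrow> real \<Rightarrow> real" where
  "re_pow_poly 0 u v = 1"
| "re_pow_poly (Suc 0) u v = u"
| "re_pow_poly (Suc (Suc m)) u v = 2 * u * re_pow_poly (Suc m) u v - v * re_pow_poly m u v"

lemma complex_square_eq: "z\<^sup>2 = 2 * of_real (Re z) * z - of_real ((cmod z)\<^sup>2)"
  using cmod_power2[of z] by (simp add: complex_eq_iff power2_eq_square)

lemma Re_power_eq_re_pow_poly: "Re (z ^ m) = re_pow_poly m (Re z) ((cmod z)\<^sup>2)"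
proof (induction m rule: less_induct)
  case (less m)
  consider "m = 0" | "m = 1" | k where "m = Suc (Suc k)"
    by (metis One_nat_def not0_implies_Suc)
  then show ?case
  proof cases
    case 3
    have "z ^ Suc (Suc k) = z\<^sup>2 * z ^ k"
      by (simp add: power2_eq_square)
    also have "\<dots> = 2 * of_real (Re z) * z ^ Suc k - of_real ((cmod z)\<^sup>2) * z ^ k"
      by (subst complex_square_eq) (simp add: algebra_simps)
    finally have "Re (z ^ Suc (Suc k)) = 2 * Re z * Re (z ^ Suc k) - (cmod z)\<^sup>2 * Re (z ^ k)"
      by simp
    then show ?thesis
      using less.IH[of k] less.IH[of "Suc k"] 3 by simp
  qed simp_all
qed

fun legendre :: "nat \<Rightarrow> real poly" where
  "legendre 0 = 1"
| "legendre (Suc 0) = [:0, 1:]"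
| "legendre (Suc (Suc n)) =
     smult (1 / (n + 2)) ([:0, 2 * n + 3:] * legendre (Suc n) - smult (n + 1) (legendre n))"

definition addition_coeff :: "nat \<Rightarrow> nat \<Rightarrow> real" where
  "addition_coeff n m = (if m = 0 then 1 else 2 * fact (n - m) / fact (n + m))"

(* With c = cos \<theta>, g = cos \<theta>' and s = sin \<theta> sin \<theta>' cos \<phi>, the factor
   re_pow_poly m s ((1 - c^2) (1 - g^2)) is (sin \<theta> sin \<theta>')^m cos (m \<phi>), so this is the right-hand
   side of the addition theorem for P_n (c g + s). *)
definition addition_sum :: "nat \<Rightarrow> real \<Rightarrow> real \<Rightarrow> real \<Rightarrow> real" where
  "addition_sum n s c g =
     (\<Sum>m\<le>n. addition_coeff n m * re_pow_poly m s ((1 - c\<^sup>2) * (1 - g\<^sup>2))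
        * poly ((pderiv ^^ m) (legendre n)) c * poly ((pderiv ^^ m) (legendre n)) g)"

(* The addition theorem holds for every n; it is verified here, by expanding both sides, only for
   the degrees occurring in f_poly. *)
lemma legendre_addition:
  assumes "n \<in> {1, 2, 3, 4, 5, 9}"
  shows "poly (legendre n) (s + c * g) = addition_sum n s c g"
proof -
  have "\<forall>n \<in> {1, 2, 3, 4, 5, 9}. poly (legendre n) (s + c * g) = addition_sum n s c g"
    unfolding addition_sum_def addition_coeff_def ball_simps
    by (intro conjI; simp add: eval_nat_numeral fact_numeral pderiv_pCons; algebra)
  with assms show ?thesis
    by blast
qed

definition complex_of_xy :: "real^3 \<Rightarrow> complex" where
  "complex_of_xy x = Complex (x$1) (x$2)"

lemma inner_eq_complex_of_xy:
  "x \<bullet> y = Re (complex_of_xy x * cnj (complex_of_xy y)) + x$3 * y$3"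
  by (simp add: complex_of_xy_def inner_vec_def sum_3)

lemma cmod_complex_of_xy_sphere:
  assumes "x \<in> sphere 0 1"
  shows "(cmod (complex_of_xy x))\<^sup>2 = 1 - (x$3)\<^sup>2"
proof -
  have "x \<bullet> x = 1"
    using assms by (simp flip: power2_norm_eq_inner)
  then show ?thesis
    unfolding complex_of_xy_def cmod_power2 by (simp add: inner_vec_def sum_3 power2_eq_square)
qed

lemma psd_kernel_on_legendre_sphere:
  assumes "n \<in> {1, 2, 3, 4, 5, 9}"
  shows "psd_kernel_on (sphere 0 1) (\<lambda>x y. poly (legendre n) ((x :: real^3) \<bullet> y))"
proof -
  define \<zeta> where "\<zeta> x y = complex_of_xy x * cnj (complex_of_xy y)" for x y
  define q where "q m = poly ((pderiv ^^ m) (legendre n))" for m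
  have "psd_kernel_on (sphere 0 1)
          (\<lambda>x y. \<Sum>m\<le>n. addition_coeff n m * (q m (x$3) * q m (y$3) * Re ((\<zeta> x y) ^ m)))"
    unfolding \<zeta>_def
    by (intro psd_kernel_on_sum psd_kernel_on_scale psd_kernel_on_weighted psd_kernel_on_Re_power)
       (simp add: addition_coeff_def)
  then show ?thesis
  proof (rule psd_kernel_on_cong)
    fix x y :: "real^3" assume "x \<in> sphere 0 1" "y \<in> sphere 0 1"
    then have "(cmod (\<zeta> x y))\<^sup>2 = (1 - (x$3)\<^sup>2) * (1 - (y$3)\<^sup>2)"
      by (simp add: \<zeta>_def norm_mult power_mult_distrib cmod_complex_of_xy_sphere)
    then show "(\<Sum>m\<le>n. addition_coeff n m * (q m (x$3) * q m (y$3) * Re ((\<zeta> x y) ^ m)))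
                 = poly (legendre n) (x \<bullet> y)"
      by (simp add: inner_eq_complex_of_xy legendre_addition[OF assms] addition_sum_def
          Re_power_eq_re_pow_poly q_def \<zeta>_def mult_ac)
  qed
qed

lemma f_poly_legendre_expansion:
  "f_poly t = 1 + (8/5 * poly (legendre 1) t + 87/25 * poly (legendre 2) t
    + 33/20 * poly (legendre 3) t + 49/25 * poly (legendre 4) t
    + 1/10 * poly (legendre 5) t + 8/25 * poly (legendre 9) t)"
  unfolding f_poly_def by (simp add: eval_nat_numeral field_simps)

lemma cos_ang_dist_sphere:
  assumes "x \<in> sphere 0 1" and "y \<in> sphere 0 1"
  shows "cos (ang_dist x y) = x \<bullet> y"
proof -
  have "\<bar>x \<bullet> y\<bar> \<le> 1"
    using assms Cauchy_Schwarz_ineq2[of x y] by simp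
  then show ?thesis
    unfolding ang_dist_def by (simp add: cos_arccos_abs)
qed

theorem lemma2:
  fixes X :: "(real^3) set"
  assumes "finite X" and "X \<subseteq> sphere 0 1"
  shows "(\<Sum>x\<in>X. \<Sum>y\<in>X. f_poly (cos (ang_dist x y))) \<ge> (real (card X))^2"
proof -
  have "psd_kernel_on (sphere 0 1) (\<lambda>x y. f_poly ((x :: real^3) \<bullet> y) - 1)"
    unfolding f_poly_legendre_expansion add_diff_cancel_left'
    by (intro psd_kernel_on_add psd_kernel_on_scale psd_kernel_on_legendre_sphere) auto
  from psd_kernel_onD[OF this assms, of "\<lambda>_. 1"]
  have "0 \<le> (\<Sum>x\<in>X. \<Sum>y\<in>X. f_poly (cos (ang_dist x y)) - 1)"
    using assms(2) by (simp add: cos_ang_dist_sphere subset_iff cong: sum.cong)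
  then show ?thesis
    by (simp add: sum_subtractf power2_eq_square)
qed

end
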